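(* Let $n\ge 1$, $v>0$, $p\in(0,1)$, $z>0$, and let $R_1,\dots,R_n>0$. Consider the system of equations in unknowns $a_0,b_0$: $$\frac{1-p}{p}b_0=\sum_{i=1}^n\frac{1+\frac{b_0}{a_0R_i}}{v-\frac{1}{a_0}-\frac{1}{b_0}},\qquad \frac{1}{zp}b_0-a_0=\sum_{i=1}^n\frac{1+\frac{a_0R_i}{b_0}}{v-\frac{1}{a_0}-\frac{1}{b_0}}.$$ Then this system has a unique positive solution ($a_0>0$, $b_0>0$). Moreover, with $r_1=\sum_{i=1}^n 1/R_i$, $r_2=\sum_{i=1}^n R_i$, $$D=n^2p^2z^2-2n^2pz^2+2n^2pz+n^2z^2-2n^2z+n^2-2np^2r_1z^2+2npr_1z^2+2npr_1z+p^2r_1^2z^2-4pr_1r_2z+4r_1r_2z,$$ and $$c=\frac{npz-nz+n-pr_1z+\sqrt{D}}{2z\,(np+(1-p)r_2)},$$ the positive solution is given by $c=a_0/b_0$, $$b_0=\frac{1}{v}\left(\frac{p}{1-p}\left(n+\frac{r_1}{c}\right)+1+\frac{1}{c}\right),\qquad a_0=c\,b_0.$$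
   Context: These are the Hamling equations for log odds ratios in the case where all reported variances $V_i$ equal $v$: $R_i$ are reported odds ratios, $p$ is the ratio of unexposed controls to total controls, $z$ is the ratio of total controls to total cases, and $a_0,b_0$ are the reference-group pseudo-cases and pseudo-non-cases. (Pseudo-counts at the other exposures are then $A_i=(1+a_0R_i/b_0)/(V_i-1/a_0-1/b_0)$ and $B_i=(1+b_0/(a_0R_i))/(V_i-1/a_0-1/b_0)$.) *)

theory Defs
  imports Complex_Main
begin

definition hamling_eqs :: "nat \<Rightarrow> (nat \<Rightarrow> real) \<Rightarrow> real \<Rightarrow> real \<Rightarrow> real \<Rightarrow> real \<Rightarrow> real \<Rightarrow> bool" where
  "hamling_eqs n R v p z a0 b0 \<longleftrightarrow>
     (1 - p) / p * b0 = (\<Sum>i=1..n. (1 + b0 / (a0 * R i)) / (v - 1/a0 - 1/b0)) \<and>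
     1 / (z * p) * b0 - a0 = (\<Sum>i=1..n. (1 + a0 * R i / b0) / (v - 1/a0 - 1/b0))"

definition hamling_D :: "nat \<Rightarrow> (nat \<Rightarrow> real) \<Rightarrow> real \<Rightarrow> real \<Rightarrow> real" where
  "hamling_D n R p z =
    (let r1 = (\<Sum>i=1..n. 1 / R i); r2 = (\<Sum>i=1..n. R i); m = real n in
     m^2*p^2*z^2 - 2*m^2*p*z^2 + 2*m^2*p*z + m^2*z^2 - 2*m^2*z + m^2
     - 2*m*p^2*r1*z^2 + 2*m*p*r1*z^2 + 2*m*p*r1*z + p^2*r1^2*z^2
     - 4*p*r1*r2*z + 4*r1*r2*z)"

definition hamling_c :: "nat \<Rightarrow> (nat \<Rightarrow> real) \<Rightarrow> real \<Rightarrow> real \<Rightarrow> real" where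
  "hamling_c n R p z =
    (let r1 = (\<Sum>i=1..n. 1 / R i); r2 = (\<Sum>i=1..n. R i); m = real n in
     (m*p*z - m*z + m - p*r1*z + sqrt (hamling_D n R p z)) / (2*z*(m*p + (1 - p)*r2)))"

definition hamling_b0 :: "nat \<Rightarrow> (nat \<Rightarrow> real) \<Rightarrow> real \<Rightarrow> real \<Rightarrow> real \<Rightarrow> real" where
  "hamling_b0 n R v p z =
    (let r1 = (\<Sum>i=1..n. 1 / R i); c = hamling_c n R p z in
     1 / v * (p / (1 - p) * (real n + r1 / c) + 1 + 1 / c))"

end

theory Submission
  imports Defs
begin

text \<open>Write \<open>c = a\<^sub>0 / b\<^sub>0\<close> and \<open>W = v - 1/a\<^sub>0 - 1/b\<^sub>0\<close>. After summing over \<open>i\<close>, both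
  equations have the form \<open>(coefficient) \<cdot> b\<^sub>0 W = (known quantity)\<close>, so dividing one by the other
  eliminates \<open>b\<^sub>0 W\<close> and leaves a quadratic equation for \<open>c\<close> with positive leading coefficient and
  negative constant term; it has exactly one positive root, the formula for \<open>c\<close>. The first equation
  is then linear in \<open>b\<^sub>0\<close> and yields the formula for \<open>b\<^sub>0\<close>; conversely these values solve the system.\<close>

lemma quadratic_pos_root_iff:
  fixes A B r c :: real
  assumes A: "A > 0" and r: "r > 0"
  shows "c > 0 \<and> A*c^2 + B*c - r = 0 \<longleftrightarrow> c = (-B + sqrt (B^2 + 4*A*r)) / (2*A)"
proof
  assume c: "c > 0 \<and> A*c^2 + B*c - r = 0"
  have "(2*A*c + B) * c = A*c^2 + r"
    using c by (simp add: algebra_simps power2_eq_square)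
  moreover have "A*c^2 + r > 0"
    using A r by (simp add: add_nonneg_pos)
  ultimately have pos: "2*A*c + B > 0"
    using c by (metis zero_less_mult_pos2)
  have "(2*A*c + B)^2 = B^2 + 4*A*(A*c^2 + B*c)"
    by (simp add: algebra_simps power2_eq_square)
  hence "(2*A*c + B)^2 = B^2 + 4*A*r"
    using c by simp
  hence "sqrt (B^2 + 4*A*r) = 2*A*c + B"
    using pos by (metis less_imp_le real_sqrt_abs abs_of_nonneg)
  thus "c = (-B + sqrt (B^2 + 4*A*r)) / (2*A)"
    using A by (simp add: field_simps)
next
  assume c: "c = (-B + sqrt (B^2 + 4*A*r)) / (2*A)"
  have "\<bar>B\<bar> < sqrt (B^2 + 4*A*r)"
    using A r by (metis real_sqrt_abs real_sqrt_less_iff less_add_same_cancel1 mult_pos_pos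
        zero_less_numeral)
  hence "B < sqrt (B^2 + 4*A*r)" by linarith
  moreover have "(sqrt (B^2 + 4*A*r))^2 = B^2 + 4*A*r"
    using A r by simp
  ultimately show "c > 0 \<and> A*c^2 + B*c - r = 0"
    using A unfolding c by (simp add: field_simps power2_eq_square)
qed

locale hamling_reduced =
  fixes m r1 r2 v p z :: real
  assumes m_pos: "m > 0" and r1_pos: "r1 > 0" and r2_pos: "r2 > 0" and v_pos: "v > 0"
    and p_pos: "p > 0" and p_less_1: "p < 1" and z_pos: "z > 0"
begin

text \<open>The Hamling system after summation, with \<open>m = n\<close>, \<open>r1 = \<Sum> 1/R\<^sub>i\<close> and \<open>r2 = \<Sum> R\<^sub>i\<close>.\<close>

definition reduced_eqs :: "real \<Rightarrow> real \<Rightarrow> bool" where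
  "reduced_eqs a b \<longleftrightarrow>
     (1-p)/p*b = (m + b/a*r1) / (v - 1/a - 1/b) \<and>
     1/(z*p)*b - a = (m + a/b*r2) / (v - 1/a - 1/b)"

definition ratio_lead :: real where
  "ratio_lead = z*((1-p)*r2 + p*m)"

definition ratio_linear :: real where
  "ratio_linear = m*(z - p*z - 1) + z*p*r1"

definition ratio :: real where
  "ratio = (-ratio_linear + sqrt (ratio_linear^2 + 4*ratio_lead*r1)) / (2*ratio_lead)"

definition b_of_ratio :: "real \<Rightarrow> real" where
  "b_of_ratio c = 1/v * (p/(1-p)*(m + r1/c) + 1 + 1/c)"

lemma ratio_lead_pos: "ratio_lead > 0"
  unfolding ratio_lead_def using z_pos p_pos p_less_1 r2_pos m_pos
  by (intro mult_pos_pos add_pos_pos) auto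

lemma ratio_quadratic_iff: "c > 0 \<and> ratio_lead*c^2 + ratio_linear*c - r1 = 0 \<longleftrightarrow> c = ratio"
  unfolding ratio_def using quadratic_pos_root_iff[OF ratio_lead_pos r1_pos] .

lemma b_of_ratio_pos: "c > 0 \<Longrightarrow> b_of_ratio c > 0"
  unfolding b_of_ratio_def using v_pos p_pos p_less_1 m_pos r1_pos
  by (intro mult_pos_pos divide_pos_pos add_pos_pos) auto

lemma reduced_eqs_cleared:
  assumes b: "b > 0" and eqs: "reduced_eqs a b"
  defines "W \<equiv> v - 1/a - 1/b" and "c \<equiv> a/b"
  shows "(1-p)*b*W = p*(m + r1/c)" and "(1 - z*p*c)*b*W = z*p*(m + c*r2)"
proof -
  have E1: "(1-p)/p*b = (m + b/a*r1) / W" and E2: "1/(z*p)*b - a = (m + a/b*r2) / W"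
    using eqs unfolding reduced_eqs_def W_def by blast+
  have W: "W \<noteq> 0"
  proof
    assume "W = 0"
    hence "(1-p)/p*b = 0" using E1 by simp
    thus False using p_pos p_less_1 b by simp
  qed
  have "(1-p)/p*b = (m + r1/c) / W"
    using E1 unfolding c_def by simp
  thus "(1-p)*b*W = p*(m + r1/c)"
    using W p_pos by (simp add: field_simps)
  have "1/(z*p)*b - c*b = (m + c*r2) / W"
    using E2 b unfolding c_def by simp
  thus "(1 - z*p*c)*b*W = z*p*(m + c*r2)"
    using W p_pos z_pos by (simp add: field_simps)
qed

lemma reduced_eqs_ratio:
  assumes a: "a > 0" and b: "b > 0" and eqs: "reduced_eqs a b"
  shows "a/b = ratio"
proof -
  define c where "c = a/b"
  define W where "W = v - 1/a - 1/b"
  have c: "c > 0" using a b by (simp add: c_def)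
  have e1: "(1-p)*b*W = p*(m + r1/c)" and e2: "(1 - z*p*c)*b*W = z*p*(m + c*r2)"
    using reduced_eqs_cleared[OF b eqs] unfolding c_def W_def by simp_all
  have "(1-p)*((1 - z*p*c)*b*W) = (1 - z*p*c)*((1-p)*b*W)" by simp
  hence "(1-p)*(z*p*(m + c*r2)) = (1 - z*p*c)*(p*(m + r1/c))" unfolding e1 e2 .
  hence "(1-p)*(z*(m + c*r2)) = (1 - z*p*c)*(m + r1/c)"
    using p_pos by simp
  hence "(1-p)*z*(m*c + c^2*r2) = (1 - z*p*c)*(m*c + r1)"
    using c by (simp add: field_simps power2_eq_square)
  hence "ratio_lead*c^2 + ratio_linear*c - r1 = 0"
    unfolding ratio_lead_def ratio_linear_def by (simp add: algebra_simps power2_eq_square)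
  hence "c = ratio" using c ratio_quadratic_iff by blast
  thus ?thesis by (simp add: c_def)
qed

lemma reduced_eqs_b:
  assumes b: "b > 0" and eqs: "reduced_eqs a b"
  shows "b = b_of_ratio (a/b)"
proof -
  define c where "c = a/b"
  have "(1-p)*b*(v - 1/(c*b) - 1/b) = p*(m + r1/c)"
    using reduced_eqs_cleared(1)[OF assms] b unfolding c_def by simp
  moreover have "(1-p)*b*(v - 1/(c*b) - 1/b) = (1-p)*(v*b - 1/c - 1)"
    using b by (simp add: field_simps)
  ultimately have "(1-p)*(v*b - 1/c - 1) = p*(m + r1/c)" by simp
  hence "b = b_of_ratio c"
    using p_less_1 v_pos unfolding b_of_ratio_def by (simp add: field_simps)
  thus ?thesis by (simp add: c_def)
qed

lemma reduced_eqs_b_of_ratio: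
  assumes c: "c > 0" and quadratic: "ratio_lead*c^2 + ratio_linear*c - r1 = 0"
  shows "reduced_eqs (c * b_of_ratio c) (b_of_ratio c)"
proof -
  define b where "b = b_of_ratio c"
  define M where "M = m + r1/c"
  have b: "b > 0" using b_of_ratio_pos c by (simp add: b_def)
  have M: "M > 0" unfolding M_def using m_pos r1_pos c by (simp add: add_pos_pos)
  have "v*b - 1/c - 1 = p/(1-p)*M"
    using v_pos unfolding b_def b_of_ratio_def M_def by simp
  moreover have "v - 1/(c*b) - 1/b = (v*b - 1/c - 1)/b"
    using b c by (simp add: field_simps)
  ultimately have W: "v - 1/(c*b) - 1/b = p/(1-p)*M/b" by simp
  have E1: "(1-p)/p*b = (m + b/(c*b)*r1) / (v - 1/(c*b) - 1/b)"
  proof -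
    have "m + b/(c*b)*r1 = M" using b by (simp add: M_def)
    thus ?thesis unfolding W using b p_pos p_less_1 M by (simp add: field_simps)
  qed
  have "(1 - z*p*c)*(m*c + r1) = z*c*(m + c*r2)*(1-p)"
    using quadratic unfolding ratio_lead_def ratio_linear_def
    by (simp add: algebra_simps power2_eq_square)
  moreover have "(1/(z*p) - c) * p * M = (1 - z*p*c)*(m*c + r1) / (z*c)"
    using z_pos p_pos c unfolding M_def by (simp add: field_simps)
  ultimately have balance: "(1/(z*p) - c) * p * M = (m + c*r2)*(1-p)"
    using z_pos c by simp
  have "(m + c*b/b*r2) / (v - 1/(c*b) - 1/b) = b*((1/(z*p) - c) * p * M) / (p*M)"
    unfolding W balance using b p_pos p_less_1 M by (simp add: field_simps)
  also have "\<dots> = 1/(z*p)*b - c*b"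
    using p_pos M by (simp add: field_simps)
  finally have E2: "1/(z*p)*b - c*b = (m + c*b/b*r2) / (v - 1/(c*b) - 1/b)" ..
  show ?thesis
    using E1 E2 unfolding reduced_eqs_def b_def by simp
qed

lemma positive_reduced_eqs_iff:
  "a > 0 \<and> b > 0 \<and> reduced_eqs a b \<longleftrightarrow> b = b_of_ratio ratio \<and> a = ratio * b"
proof
  assume "a > 0 \<and> b > 0 \<and> reduced_eqs a b"
  thus "b = b_of_ratio ratio \<and> a = ratio * b"
    using reduced_eqs_ratio reduced_eqs_b by (metis nonzero_eq_divide_eq less_irrefl)
next
  assume sol: "b = b_of_ratio ratio \<and> a = ratio * b"
  have "ratio > 0" "ratio_lead*ratio^2 + ratio_linear*ratio - r1 = 0"
    using ratio_quadratic_iff by auto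
  thus "a > 0 \<and> b > 0 \<and> reduced_eqs a b"
    using sol b_of_ratio_pos reduced_eqs_b_of_ratio by simp
qed

end

locale hamling =
  fixes n :: nat and R :: "nat \<Rightarrow> real" and v p z :: real
  assumes n_pos: "n \<ge> 1" and v_pos: "v > 0" and p_pos: "0 < p" and p_less_1: "p < 1"
    and z_pos: "z > 0" and R_pos: "\<And>i. i \<in> {1..n} \<Longrightarrow> R i > 0"

sublocale hamling \<subseteq> hamling_reduced "real n" "\<Sum>i=1..n. 1 / R i" "\<Sum>i=1..n. R i" v p z
proof
  have "{1..n} \<noteq> {}" using n_pos by simp
  thus "(\<Sum>i=1..n. 1 / R i) > 0" "(\<Sum>i=1..n. R i) > 0"
    using R_pos by (auto intro: sum_pos)
qed (use n_pos v_pos p_pos p_less_1 z_pos in auto)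

context hamling
begin

lemma hamling_eqs_iff_reduced_eqs: "hamling_eqs n R v p z a b \<longleftrightarrow> reduced_eqs a b"
proof -
  have "(\<Sum>i=1..n. (1 + b / (a * R i)) / W) = (real n + b/a*(\<Sum>i=1..n. 1 / R i)) / W"
    and "(\<Sum>i=1..n. (1 + a * R i / b) / W) = (real n + a/b*(\<Sum>i=1..n. R i)) / W" for W
    by (simp_all add: sum_divide_distrib[symmetric] sum.distrib sum_distrib_left)
  thus ?thesis
    unfolding hamling_eqs_def reduced_eqs_def by presburger
qed

lemma hamling_c_eq_ratio: "hamling_c n R p z = ratio"
proof -
  have "hamling_D n R p z = ratio_linear^2 + 4 * ratio_lead * (\<Sum>i=1..n. 1 / R i)"
    unfolding hamling_D_def ratio_linear_def ratio_lead_def Let_def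
    by (simp add: algebra_simps power2_eq_square)
  thus ?thesis
    unfolding hamling_c_def ratio_def ratio_linear_def ratio_lead_def Let_def
    by (simp add: algebra_simps)
qed

lemma hamling_b0_eq_b_of_ratio: "hamling_b0 n R v p z = b_of_ratio ratio"
  unfolding hamling_b0_def b_of_ratio_def hamling_c_eq_ratio Let_def ..

lemma positive_hamling_eqs_iff:
  "a > 0 \<and> b > 0 \<and> hamling_eqs n R v p z a b \<longleftrightarrow>
     b = hamling_b0 n R v p z \<and> a = hamling_c n R p z * b"
  unfolding hamling_eqs_iff_reduced_eqs hamling_c_eq_ratio hamling_b0_eq_b_of_ratio
  by (rule positive_reduced_eqs_iff)

end

theorem theorem3:
  fixes n :: nat and R :: "nat \<Rightarrow> real" and v p z :: real
  assumes "n \<ge> 1" and "v > 0" and "0 < p" and "p < 1" and "z > 0"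
    and "\<And>i. i \<in> {1..n} \<Longrightarrow> R i > 0"
  shows "(\<exists>!ab. fst ab > 0 \<and> snd ab > 0 \<and> hamling_eqs n R v p z (fst ab) (snd ab)) \<and>
         (\<forall>a0 b0. a0 > 0 \<and> b0 > 0 \<and> hamling_eqs n R v p z a0 b0 \<longrightarrow>
            hamling_c n R p z = a0 / b0 \<and>
            b0 = hamling_b0 n R v p z \<and>
            a0 = hamling_c n R p z * b0)"
proof -
  interpret hamling n R v p z
    using assms by unfold_locales
  let ?sol = "(hamling_c n R p z * hamling_b0 n R v p z, hamling_b0 n R v p z)"
  have "\<exists>!ab. fst ab > 0 \<and> snd ab > 0 \<and> hamling_eqs n R v p z (fst ab) (snd ab)"
    by (rule ex1I[of _ ?sol]) (auto simp: positive_hamling_eqs_iff)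
  moreover have "hamling_c n R p z = a0 / b0 \<and> b0 = hamling_b0 n R v p z \<and>
      a0 = hamling_c n R p z * b0" if "a0 > 0 \<and> b0 > 0 \<and> hamling_eqs n R v p z a0 b0" for a0 b0
  proof -
    have "b0 = hamling_b0 n R v p z \<and> a0 = hamling_c n R p z * b0"
      using that positive_hamling_eqs_iff by blast
    with that show ?thesis by simp
  qed
  ultimately show ?thesis by blast
qed

end
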